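(* Let $\varphi:(\alpha,\beta)\to\mathbb{R}^n$ with $-\infty\le\alpha<0<\beta\le\infty$. Then $\varphi$ is the coordinate projection of a solution of a Noetherian initial value problem if and only if $\varphi$ is the coordinate projection of a solution of a polynomial initial value problem.
   Context: A Noetherian chain is a sequence of real analytic functions $h_1,\dots,h_r:H\to\mathbb{R}$ on an open connected set $H\subseteq\mathbb{R}^k$ such that for all $i\le k$, $j\le r$ there is a polynomial $q_{ij}\in\mathbb{R}[y_1,\dots,y_k,z_1,\dots,z_r]$ with $\frac{\partial h_j}{\partial y_i}(y)=q_{ij}(y,h_1(y),\dots,h_r(y))$ on $H$. A function $h:H\to\mathbb{R}$ is Noetherian if $h(y)=p(y,h_1(y),\dots,h_r(y))$ for some polynomial $p$ with real coefficients and some Noetherian chain $h_1,\dots,h_r$ on $H$. An initial value problem (IVP) of dimension $m$ is given by a map $F:D\to\mathbb{R}^m$ on an open connected domain $D\subseteq\mathbb{R}^m$ and an initial value $X_0\in D$; it is Noetherian if every component of $F$ is a Noetherian function on $D$, and polynomial if $D=\mathbb{R}^m$ and every component of $F$ is a polynomial. A solution on $(\alpha,\beta)$ is a differentiable $\psi:(\alpha,\beta)\to D$ with $\psi(0)=X_0$ and $\psi'(t)=F(\psi(t))$ for all $t$. We say $\varphi:(\alpha,\beta)\to\mathbb{R}^n$ is the coordinate projection of a solution of an IVP of dimension $m\ge n$ if there is a solution $\psi$ on $(\alpha,\beta)$ of that IVP whose first $n$ coordinates equal $\varphi$. *)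

theory Defs
  imports "HOL-Analysis.Analysis"
begin

text \<open>Points of R^m are represented as functions nat => real vanishing from index m on.
  The topology on nat => real is the product topology, whose restriction to this slice
  is the Euclidean topology of R^m.\<close>

definition slice :: "nat \<Rightarrow> (nat \<Rightarrow> real) set" where
  "slice m = {x. \<forall>i\<ge>m. x i = 0}"

definition open_conn :: "nat \<Rightarrow> (nat \<Rightarrow> real) set \<Rightarrow> bool" where
  "open_conn m D \<longleftrightarrow> D \<subseteq> slice m \<and> openin (top_of_set (slice m)) D \<and> connected D"

inductive poly_fun :: "nat \<Rightarrow> ((nat \<Rightarrow> real) \<Rightarrow> real) \<Rightarrow> bool" for N where
  pconst: "poly_fun N (\<lambda>x. c)"
| pvar: "i < N \<Longrightarrow> poly_fun N (\<lambda>x. x i)"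
| padd: "poly_fun N p \<Longrightarrow> poly_fun N q \<Longrightarrow> poly_fun N (\<lambda>x. p x + q x)"
| pmult: "poly_fun N p \<Longrightarrow> poly_fun N q \<Longrightarrow> poly_fun N (\<lambda>x. p x * q x)"

definition real_analytic_dim :: "nat \<Rightarrow> ((nat \<Rightarrow> real) \<Rightarrow> real) \<Rightarrow> (nat \<Rightarrow> real) set \<Rightarrow> bool" where
  "real_analytic_dim k h H \<longleftrightarrow>
     (\<forall>y\<in>H. \<exists>e>0. \<exists>a :: (nat \<Rightarrow> nat) \<Rightarrow> real.
        \<forall>x\<in>H. (\<Sum>i<k. (x i - y i)^2) < e^2 \<longrightarrow>
          ((\<lambda>\<alpha>. a \<alpha> * (\<Prod>i<k. (x i - y i) ^ \<alpha> i)) has_sum h x) {\<alpha>. \<forall>i\<ge>k. \<alpha> i = 0})"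

definition ext :: "nat \<Rightarrow> nat \<Rightarrow> (nat \<Rightarrow> (nat \<Rightarrow> real) \<Rightarrow> real) \<Rightarrow> (nat \<Rightarrow> real) \<Rightarrow> (nat \<Rightarrow> real)" where
  "ext k r hs y = (\<lambda>i. if i < k then y i else if i < k + r then hs (i - k) y else 0)"

definition noetherian_chain :: "nat \<Rightarrow> (nat \<Rightarrow> real) set \<Rightarrow> nat \<Rightarrow> (nat \<Rightarrow> (nat \<Rightarrow> real) \<Rightarrow> real) \<Rightarrow> bool" where
  "noetherian_chain k H r hs \<longleftrightarrow> open_conn k H \<and>
     (\<forall>j<r. real_analytic_dim k (hs j) H) \<and>
     (\<forall>i<k. \<forall>j<r. \<exists>q. poly_fun (k + r) q \<and>
        (\<forall>y\<in>H. ((\<lambda>s. hs j (y(i := s))) has_real_derivative q (ext k r hs y)) (at (y i))))"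

definition noetherian_fun :: "nat \<Rightarrow> (nat \<Rightarrow> real) set \<Rightarrow> ((nat \<Rightarrow> real) \<Rightarrow> real) \<Rightarrow> bool" where
  "noetherian_fun k H h \<longleftrightarrow> (\<exists>r hs p. noetherian_chain k H r hs \<and> poly_fun (k + r) p \<and>
     (\<forall>y\<in>H. h y = p (ext k r hs y)))"

definition noetherian_ivp :: "nat \<Rightarrow> (nat \<Rightarrow> real) set \<Rightarrow> (nat \<Rightarrow> (nat \<Rightarrow> real) \<Rightarrow> real) \<Rightarrow> (nat \<Rightarrow> real) \<Rightarrow> bool" where
  "noetherian_ivp m D F X0 \<longleftrightarrow> open_conn m D \<and> X0 \<in> D \<and> (\<forall>i<m. noetherian_fun m D (F i))"

definition polynomial_ivp :: "nat \<Rightarrow> (nat \<Rightarrow> real) set \<Rightarrow> (nat \<Rightarrow> (nat \<Rightarrow> real) \<Rightarrow> real) \<Rightarrow> (nat \<Rightarrow> real) \<Rightarrow> bool" where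
  "polynomial_ivp m D F X0 \<longleftrightarrow> D = slice m \<and> X0 \<in> D \<and> (\<forall>i<m. poly_fun m (F i))"

definition ointerval :: "ereal \<Rightarrow> ereal \<Rightarrow> real set" where
  "ointerval a b = {t. a < ereal t \<and> ereal t < b}"

definition is_solution :: "nat \<Rightarrow> (nat \<Rightarrow> real) set \<Rightarrow> (nat \<Rightarrow> (nat \<Rightarrow> real) \<Rightarrow> real) \<Rightarrow> (nat \<Rightarrow> real)
    \<Rightarrow> ereal \<Rightarrow> ereal \<Rightarrow> (real \<Rightarrow> nat \<Rightarrow> real) \<Rightarrow> bool" where
  "is_solution m D F X0 a b \<psi> \<longleftrightarrow> \<psi> 0 = X0 \<and>
     (\<forall>t\<in>ointerval a b. \<psi> t \<in> D \<and>
        (\<forall>i<m. ((\<lambda>s. \<psi> s i) has_real_derivative F i (\<psi> t)) (at t)))"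

definition proj_of_noetherian_ivp :: "nat \<Rightarrow> ereal \<Rightarrow> ereal \<Rightarrow> (real \<Rightarrow> nat \<Rightarrow> real) \<Rightarrow> bool" where
  "proj_of_noetherian_ivp n a b \<phi> \<longleftrightarrow> (\<exists>m D F X0 \<psi>. n \<le> m \<and> noetherian_ivp m D F X0 \<and>
     is_solution m D F X0 a b \<psi> \<and> (\<forall>t\<in>ointerval a b. \<forall>i<n. \<psi> t i = \<phi> t i))"

definition proj_of_polynomial_ivp :: "nat \<Rightarrow> ereal \<Rightarrow> ereal \<Rightarrow> (real \<Rightarrow> nat \<Rightarrow> real) \<Rightarrow> bool" where
  "proj_of_polynomial_ivp n a b \<phi> \<longleftrightarrow> (\<exists>m D F X0 \<psi>. n \<le> m \<and> polynomial_ivp m D F X0 \<and>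
     is_solution m D F X0 a b \<psi> \<and> (\<forall>t\<in>ointerval a b. \<forall>i<n. \<psi> t i = \<phi> t i))"

end

theory Submission
  imports Defs
begin

text \<open>A polynomial IVP is Noetherian with the empty chain. Conversely, merge the chains of
  the components F_i = p_i(y, h(y)) into a single chain h_1, ..., h_r and adjoin the coordinates
  h_j(\<psi>(t)) to the solution \<psi>. By the chain rule their derivatives are
  \<Sum>_i q_ij(\<psi>, h(\<psi>)) p_i(\<psi>, h(\<psi>)), polynomial in the enlarged state, so the enlarged curve
  solves a polynomial IVP. The chain rule only needs continuous partial derivatives; these are
  polynomials in the coordinates and in the analytic, hence continuous, functions h_j.\<close>

lemma poly_fun_cong: "poly_fun N p \<Longrightarrow> (\<And>i. i < N \<Longrightarrow> x i = x' i) \<Longrightarrow> p x = p x'"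
  by (induction rule: poly_fun.induct) auto

lemma poly_fun_compose:
  "poly_fun N p \<Longrightarrow> (\<And>i. i < N \<Longrightarrow> poly_fun N' (\<lambda>z. \<sigma> z i)) \<Longrightarrow> poly_fun N' (\<lambda>z. p (\<sigma> z))"
  by (induction rule: poly_fun.induct) (auto intro: poly_fun.intros)

lemma poly_fun_mono: "poly_fun N p \<Longrightarrow> N \<le> N' \<Longrightarrow> poly_fun N' p"
  using poly_fun_compose[of N p N' "\<lambda>z. z"] by (simp add: poly_fun.pvar)

lemma poly_fun_sum:
  "finite A \<Longrightarrow> (\<And>a. a \<in> A \<Longrightarrow> poly_fun N (f a)) \<Longrightarrow> poly_fun N (\<lambda>z. \<Sum>a\<in>A. f a z)"
  by (induction rule: finite_induct) (auto intro: poly_fun.intros)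

lemma continuous_on_poly_fun: "poly_fun N p \<Longrightarrow> continuous_on S p"
  by (induction rule: poly_fun.induct)
    (auto intro!: continuous_intros continuous_on_subset[OF continuous_on_product_coordinates])

text \<open>The distance on nat \<Rightarrow> real is that of Function_Metric, which induces the product
  topology used in Defs.\<close>

lemma dist_fun_le_coordinatewise:
  fixes x y :: "'a::countable \<Rightarrow> 'b::metric_space"
  assumes "\<And>i. dist (x i) (y i) \<le> \<delta>"
  shows "dist x y \<le> 2 * \<delta>"
proof (rule field_le_epsilon)
  fix e :: real assume "e > 0"
  then obtain N where N: "(1/2) ^ N < e" using real_arch_pow_inv[of e "1/2"] by auto
  have "Max {dist (x (from_nat n)) (y (from_nat n)) |n. n \<le> N} \<le> \<delta>"
    using assms by (subst Max_le_iff) auto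
  then show "dist x y \<le> 2 * \<delta> + e"
    using dist_fun_le_dist_first_terms[of x y N] N by linarith
qed

definition cube :: "nat \<Rightarrow> (nat \<Rightarrow> real) \<Rightarrow> real \<Rightarrow> (nat \<Rightarrow> real) set" where
  "cube k c r = {x \<in> slice k. \<forall>i<k. \<bar>x i - c i\<bar> \<le> r}"

lemma dist_le_of_mem_cube:
  assumes "c \<in> slice k" "x \<in> cube k c r" "0 \<le> r"
  shows "dist x c \<le> 2 * r"
proof (rule dist_fun_le_coordinatewise)
  fix i
  show "dist (x i) (c i) \<le> r"
    using assms by (cases "i < k") (auto simp: cube_def slice_def dist_real_def)
qed

lemma cube_mono: "r \<le> r' \<Longrightarrow> cube k c r \<subseteq> cube k c r'"
  by (auto simp: cube_def)

lemma openin_slice_contains_cube: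
  assumes "openin (top_of_set (slice k)) H" "c \<in> H"
  shows "\<exists>\<delta>>0. cube k c \<delta> \<subseteq> H"
proof -
  obtain U where U: "open U" "H = U \<inter> slice k"
    using assms(1) by (auto simp: openin_open)
  then obtain e where e: "e > 0" "ball c e \<subseteq> U"
    using assms(2) open_contains_ball by blast
  have "cube k c (e/3) \<subseteq> ball c e"
  proof
    fix x assume "x \<in> cube k c (e/3)"
    then have "dist x c \<le> 2 * (e/3)"
      using dist_le_of_mem_cube[of c k x "e/3"] U(2) assms(2) e(1) by simp
    then show "x \<in> ball c e"
      using e(1) by (simp add: dist_commute)
  qed
  then have "cube k c (e/3) \<subseteq> H" using e(2) U(2) by (auto simp: cube_def)
  then show ?thesis using e(1) by (intro exI[of _ "e/3"]) auto
qed

lemma eventually_coordinates_near: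
  fixes c :: "'a \<Rightarrow> real"
  assumes "\<delta> > 0" "finite I"
  shows "eventually (\<lambda>x. \<forall>i\<in>I. \<bar>x i - c i\<bar> < \<delta>) (at c within S)"
proof (rule eventually_ball_finite[OF assms(2)], intro ballI)
  fix i
  have "((\<lambda>x. x i) \<longlongrightarrow> c i) (at c within S)"
    using continuous_on_product_coordinates[of i]
    by (metis UNIV_I continuous_on_def tendsto_within_subset subset_UNIV)
  from tendstoD[OF this assms(1)] show "eventually (\<lambda>x. \<bar>x i - c i\<bar> < \<delta>) (at c within S)"
    by (simp add: dist_real_def)
qed

lemma connected_slice: "connected (slice k)"
proof (rule path_connected_imp_connected, unfold path_connected_def, intro ballI)
  fix x y assume "x \<in> slice k" "y \<in> slice k"
  define g where "g t = (\<lambda>i. (1 - t) * x i + t * y i)" for t :: real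
  have "path g"
    unfolding path_def g_def by (intro continuous_intros)
  moreover have "path_image g \<subseteq> slice k"
    using \<open>x \<in> slice k\<close> \<open>y \<in> slice k\<close> by (auto simp: path_image_def g_def slice_def)
  moreover have "pathstart g = x" "pathfinish g = y"
    by (auto simp: pathstart_def pathfinish_def g_def)
  ultimately show "\<exists>g. path g \<and> path_image g \<subseteq> slice k \<and> pathstart g = x \<and> pathfinish g = y"
    by blast
qed

lemma open_ointerval: "open (ointerval a b)"
proof -
  have "ointerval a b = {t. a < ereal t} \<inter> {t. ereal t < b}"
    by (auto simp: ointerval_def)
  then show ?thesis
    by (simp add: open_Collect_less open_Int continuous_on_ereal continuous_on_const continuous_on_id)
qed

lemma has_sum_abs_le:
  fixes f g :: "'a \<Rightarrow> real"
  assumes "(f has_sum s) A" "(g has_sum t) A" "\<And>x. x \<in> A \<Longrightarrow> \<bar>f x\<bar> \<le> g x"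
  shows "\<bar>s\<bar> \<le> t"
proof -
  have "f x \<le> g x" "- g x \<le> f x" if "x \<in> A" for x
    using assms(3)[OF that] by linarith+
  then have "s \<le> t" "- t \<le> s"
    using has_sum_mono[OF assms(1,2)] has_sum_mono[OF has_sum_uminusI[OF assms(2)] assms(1)] by auto
  then show ?thesis by linarith
qed

lemma power_le_ratio_mult_power:
  fixes \<delta> \<rho> :: real
  assumes "0 < \<delta>" "\<delta> \<le> \<rho>" "N \<ge> 1"
  shows "\<delta> ^ N \<le> \<delta> / \<rho> * \<rho> ^ N"
proof -
  obtain M where N: "N = Suc M" using assms(3) by (cases N) auto
  have "\<delta> * \<delta> ^ M \<le> \<delta> * \<rho> ^ M"
    using assms by (intro mult_left_mono power_mono) auto
  then show ?thesis using assms N by simp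
qed

text \<open>Only the terms with \<alpha> \<noteq> 0 change between the centre c and x, each by at most \<delta>/\<rho>
  times its majorant term.\<close>

lemma power_series_increment_le:
  fixes a :: "(nat \<Rightarrow> nat) \<Rightarrow> real"
  assumes x: "((\<lambda>\<alpha>. a \<alpha> * (\<Prod>i<k. (x i - c i) ^ \<alpha> i)) has_sum s) A"
    and centre: "((\<lambda>\<alpha>. a \<alpha> * (\<Prod>i<k. 0 ^ \<alpha> i)) has_sum s\<^sub>0) A"
    and majorant: "((\<lambda>\<alpha>. \<bar>a \<alpha>\<bar> * \<rho> ^ (\<Sum>i<k. \<alpha> i)) has_sum S) A"
    and \<delta>: "0 < \<delta>" "\<delta> \<le> \<rho>" and near: "\<And>i. i < k \<Longrightarrow> \<bar>x i - c i\<bar> \<le> \<delta>"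
  shows "\<bar>s - s\<^sub>0\<bar> \<le> \<delta> / \<rho> * S"
proof (rule has_sum_abs_le)
  show "((\<lambda>\<alpha>. a \<alpha> * (\<Prod>i<k. (x i - c i) ^ \<alpha> i) - a \<alpha> * (\<Prod>i<k. 0 ^ \<alpha> i)) has_sum (s - s\<^sub>0)) A"
    using has_sum_add[OF x has_sum_uminusI[OF centre]] by simp
  show "((\<lambda>\<alpha>. \<delta> / \<rho> * (\<bar>a \<alpha>\<bar> * \<rho> ^ (\<Sum>i<k. \<alpha> i))) has_sum (\<delta> / \<rho> * S)) A"
    by (rule has_sum_cmult_right[OF majorant])
next
  fix \<alpha>
  show "\<bar>a \<alpha> * (\<Prod>i<k. (x i - c i) ^ \<alpha> i) - a \<alpha> * (\<Prod>i<k. 0 ^ \<alpha> i)\<bar>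
      \<le> \<delta> / \<rho> * (\<bar>a \<alpha>\<bar> * \<rho> ^ (\<Sum>i<k. \<alpha> i))"
  proof (cases "\<forall>i<k. \<alpha> i = 0")
    case True
    then show ?thesis using \<delta> by simp
  next
    case False
    then obtain i\<^sub>0 where i\<^sub>0: "i\<^sub>0 < k" "\<alpha> i\<^sub>0 \<noteq> 0" by auto
    have vanish: "(\<Prod>i<k. (0::real) ^ \<alpha> i) = 0"
      using i\<^sub>0 by (auto simp: prod_zero_iff)
    have "\<alpha> i\<^sub>0 \<le> (\<Sum>i<k. \<alpha> i)"
      using i\<^sub>0(1) by (intro member_le_sum) auto
    then have N: "(\<Sum>i<k. \<alpha> i) \<ge> 1" using i\<^sub>0(2) by linarith
    have "\<bar>a \<alpha> * (\<Prod>i<k. (x i - c i) ^ \<alpha> i)\<bar> = \<bar>a \<alpha>\<bar> * (\<Prod>i<k. \<bar>x i - c i\<bar> ^ \<alpha> i)"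
      by (simp add: abs_mult abs_prod power_abs)
    also have "\<dots> \<le> \<bar>a \<alpha>\<bar> * (\<Prod>i<k. \<delta> ^ \<alpha> i)"
      using near by (intro mult_left_mono prod_mono) (auto intro: power_mono)
    also have "\<dots> = \<bar>a \<alpha>\<bar> * \<delta> ^ (\<Sum>i<k. \<alpha> i)"
      by (simp add: power_sum)
    also have "\<dots> \<le> \<bar>a \<alpha>\<bar> * (\<delta> / \<rho> * \<rho> ^ (\<Sum>i<k. \<alpha> i))"
      using power_le_ratio_mult_power[OF \<delta> N] by (intro mult_left_mono) auto
    finally show ?thesis
      unfolding vanish by (simp add: mult_ac)
  qed
qed

lemma sum_squares_lt_of_mem_cube:
  assumes "x \<in> cube k c \<rho>" "0 < \<rho>" "(real k + 1) * \<rho> \<le> e"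
  shows "(\<Sum>i<k. (x i - c i)^2) < e^2"
proof -
  have "(\<Sum>i<k. (x i - c i)^2) \<le> (\<Sum>i<k. \<rho>^2)"
    using assms(1) by (intro sum_mono) (auto simp: cube_def abs_le_square_iff[symmetric])
  also have "\<dots> < (real k + 1)^2 * \<rho>^2"
    using assms(2) by (simp add: power2_eq_square algebra_simps add_pos_nonneg)
  also have "\<dots> \<le> e^2"
    using assms(2,3) power_mono[OF assms(3), of 2] by (simp add: power_mult_distrib)
  finally show ?thesis .
qed

lemma real_analytic_dim_majorant:
  assumes H: "openin (top_of_set (slice k)) H" and h: "real_analytic_dim k h H" and "c \<in> H"
  obtains \<rho> a S where "\<rho> > 0" "cube k c \<rho> \<subseteq> H"
    "\<And>x. x \<in> cube k c \<rho> \<Longrightarrow>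
       ((\<lambda>\<alpha>. a \<alpha> * (\<Prod>i<k. (x i - c i) ^ \<alpha> i)) has_sum h x) {\<alpha>. \<forall>i\<ge>k. \<alpha> i = 0}"
    "((\<lambda>\<alpha>. \<bar>a \<alpha>\<bar> * \<rho> ^ (\<Sum>i<k. \<alpha> i)) has_sum S) {\<alpha>. \<forall>i\<ge>k. \<alpha> i = 0}"
proof -
  define A where "A = {\<alpha>::nat \<Rightarrow> nat. \<forall>i\<ge>k. \<alpha> i = 0}"
  obtain e a where e: "e > 0" and series: "\<And>x. x \<in> H \<Longrightarrow> (\<Sum>i<k. (x i - c i)^2) < e^2 \<Longrightarrow>
      ((\<lambda>\<alpha>. a \<alpha> * (\<Prod>i<k. (x i - c i) ^ \<alpha> i)) has_sum h x) A"
    using h \<open>c \<in> H\<close> unfolding real_analytic_dim_def A_def by blast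
  obtain \<delta>\<^sub>0 where "\<delta>\<^sub>0 > 0" "cube k c \<delta>\<^sub>0 \<subseteq> H"
    using openin_slice_contains_cube[OF H \<open>c \<in> H\<close>] by blast
  define \<rho> where "\<rho> = min \<delta>\<^sub>0 (e / (real k + 1))"
  have \<rho>: "\<rho> > 0" "cube k c \<rho> \<subseteq> H"
    using \<open>\<delta>\<^sub>0 > 0\<close> \<open>cube k c \<delta>\<^sub>0 \<subseteq> H\<close> cube_mono[of \<rho> \<delta>\<^sub>0] e by (auto simp: \<rho>_def)
  have "\<rho> \<le> e / (real k + 1)"
    by (simp add: \<rho>_def)
  then have "(real k + 1) * \<rho> \<le> e"
    by (simp add: field_simps)
  have has_sum_cube: "((\<lambda>\<alpha>. a \<alpha> * (\<Prod>i<k. (x i - c i) ^ \<alpha> i)) has_sum h x) A"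
    if "x \<in> cube k c \<rho>" for x
  proof (rule series)
    show "x \<in> H"
      using that \<rho>(2) by blast
    show "(\<Sum>i<k. (x i - c i)^2) < e^2"
      using sum_squares_lt_of_mem_cube[OF that \<rho>(1) \<open>(real k + 1) * \<rho> \<le> e\<close>] .
  qed
  define x\<^sub>0 where "x\<^sub>0 i = (if i < k then c i + \<rho> else 0)" for i
  have "x\<^sub>0 \<in> cube k c \<rho>"
    using \<rho>(1) by (auto simp: cube_def slice_def x\<^sub>0_def)
  from has_sum_cube[OF this]
  have "(\<lambda>\<alpha>. a \<alpha> * \<rho> ^ (\<Sum>i<k. \<alpha> i)) summable_on A"
    by (auto simp: summable_on_def x\<^sub>0_def power_sum)
  then have "(\<lambda>\<alpha>. norm (a \<alpha> * \<rho> ^ (\<Sum>i<k. \<alpha> i))) summable_on A"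
    by (rule summable_on_iff_abs_summable_on_real[THEN iffD1])
  moreover have "norm (a \<alpha> * \<rho> ^ (\<Sum>i<k. \<alpha> i)) = \<bar>a \<alpha>\<bar> * \<rho> ^ (\<Sum>i<k. \<alpha> i)" for \<alpha>
    using \<rho>(1) by (simp add: abs_mult)
  ultimately have "(\<lambda>\<alpha>. \<bar>a \<alpha>\<bar> * \<rho> ^ (\<Sum>i<k. \<alpha> i)) summable_on A"
    by simp
  then show ?thesis
    using that[OF \<rho> has_sum_cube[unfolded A_def]] unfolding A_def summable_on_def by blast
qed

lemma continuous_on_real_analytic_dim:
  assumes H: "openin (top_of_set (slice k)) H" and h: "real_analytic_dim k h H"
  shows "continuous_on H h"
  unfolding continuous_on_def
proof (intro ballI tendstoI)
  fix c and \<epsilon> :: real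
  assume "c \<in> H" "\<epsilon> > 0"
  obtain \<rho> a S where \<rho>: "\<rho> > 0" "cube k c \<rho> \<subseteq> H"
    and series: "\<And>x. x \<in> cube k c \<rho> \<Longrightarrow>
       ((\<lambda>\<alpha>. a \<alpha> * (\<Prod>i<k. (x i - c i) ^ \<alpha> i)) has_sum h x) {\<alpha>. \<forall>i\<ge>k. \<alpha> i = 0}"
    and majorant: "((\<lambda>\<alpha>. \<bar>a \<alpha>\<bar> * \<rho> ^ (\<Sum>i<k. \<alpha> i)) has_sum S) {\<alpha>. \<forall>i\<ge>k. \<alpha> i = 0}"
    by (erule real_analytic_dim_majorant[OF H h \<open>c \<in> H\<close>])
  have "S \<ge> 0"
    using \<rho>(1) by (intro has_sum_nonneg[OF majorant]) simp
  define \<delta> where "\<delta> = min \<rho> (\<epsilon> * \<rho> / (S + 1))"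
  have \<delta>: "0 < \<delta>" "\<delta> \<le> \<rho>"
    using \<rho>(1) \<open>\<epsilon> > 0\<close> \<open>S \<ge> 0\<close> by (auto simp: \<delta>_def)
  have "\<delta> \<le> \<epsilon> * \<rho> / (S + 1)"
    by (simp add: \<delta>_def)
  then have "\<delta> / \<rho> \<le> \<epsilon> / (S + 1)"
    using \<rho>(1) \<open>S \<ge> 0\<close> by (simp add: field_simps)
  then have "\<delta> / \<rho> * S \<le> \<epsilon> / (S + 1) * S"
    using \<open>S \<ge> 0\<close> by (rule mult_right_mono)
  also have "\<dots> < \<epsilon>"
    using \<open>\<epsilon> > 0\<close> \<open>S \<ge> 0\<close> by (simp add: field_simps)
  finally have small: "\<delta> / \<rho> * S < \<epsilon>" .
  have "H \<subseteq> slice k"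
    using openin_subset[OF H] by simp
  then have "c \<in> cube k c \<rho>"
    using \<open>c \<in> H\<close> \<rho>(1) by (auto simp: cube_def)
  have "eventually (\<lambda>x. x \<in> H) (at c within H)"
    by (simp add: eventually_at_filter)
  with eventually_coordinates_near[OF \<delta>(1) finite_lessThan[of k], where c = c and S = H]
  show "eventually (\<lambda>x. dist (h x) (h c) < \<epsilon>) (at c within H)"
  proof eventually_elim
    case (elim x)
    then have "x \<in> cube k c \<rho>"
      using \<open>H \<subseteq> slice k\<close> \<delta>(2) by (force simp: cube_def)
    have "\<bar>h x - h c\<bar> \<le> \<delta> / \<rho> * S"
      using series[OF \<open>c \<in> cube k c \<rho>\<close>] elim(1)
      by (intro power_series_increment_le[OF series[OF \<open>x \<in> cube k c \<rho>\<close>] _ majorant \<delta>])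
        (auto simp: less_imp_le)
    then show ?case
      using small by (simp add: dist_real_def)
  qed
qed

lemma tendsto_of_mem_cube:
  assumes "(r \<longlongrightarrow> 0) F" "\<And>s. 0 \<le> r s" "c \<in> slice k"
    and "eventually (\<lambda>s. w s \<in> cube k c (r s)) F"
  shows "(w \<longlongrightarrow> c) F"
proof (rule metric_tendsto_imp_tendsto)
  show "((\<lambda>s. 2 * r s) \<longlongrightarrow> 0) F"
    using tendsto_mult_right_zero[OF assms(1)] by simp
  show "eventually (\<lambda>s. dist (w s) c \<le> dist (2 * r s) 0) F"
    using assms(4) by eventually_elim (use assms(2,3) dist_le_of_mem_cube in auto)
qed

lemma MVT_abs:
  fixes f f' :: "real \<Rightarrow> real"
  assumes "\<And>u. \<bar>u - a\<bar> \<le> \<bar>b - a\<bar> \<Longrightarrow> (f has_real_derivative f' u) (at u)"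
  shows "\<exists>\<xi>. \<bar>\<xi> - a\<bar> \<le> \<bar>b - a\<bar> \<and> f b - f a = (b - a) * f' \<xi>"
proof (cases a b rule: linorder_cases)
  case less
  then obtain \<xi> where "a < \<xi>" "\<xi> < b" "f b - f a = (b - a) * f' \<xi>"
    using MVT2[OF less, of f f'] assms by force
  then show ?thesis by (intro exI[of _ \<xi>]) auto
next
  case greater
  then obtain \<xi> where "b < \<xi>" "\<xi> < a" "f a - f b = (a - b) * f' \<xi>"
    using MVT2[OF greater, of f f'] assms by force
  then show ?thesis by (intro exI[of _ \<xi>]) (auto simp: algebra_simps)
qed auto

lemma increment_eq_sum_partials:
  assumes c: "c \<in> slice k" and x: "x \<in> cube k c r" and cube: "cube k c r \<subseteq> H"
    and partial: "\<And>i p. i < k \<Longrightarrow> p \<in> H \<Longrightarrow>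
      ((\<lambda>u. h (p(i := u))) has_real_derivative g i p) (at (p i))"
  shows "\<exists>w. (\<forall>l<k. w l \<in> cube k c r) \<and> h x - h c = (\<Sum>l<k. (x l - c l) * g l (w l))"
proof -
  define z where "z l = (\<lambda>i. if i < l then x i else c i)" for l
  have z_cube: "(z l)(l := u) \<in> cube k c r" if "l < k" "\<bar>u - c l\<bar> \<le> \<bar>x l - c l\<bar>" for l u
    using that c x by (auto simp: z_def cube_def slice_def)
  have "\<exists>\<xi>. \<bar>\<xi> - c l\<bar> \<le> \<bar>x l - c l\<bar> \<and>
      h ((z l)(l := x l)) - h ((z l)(l := c l)) = (x l - c l) * g l ((z l)(l := \<xi>))"
    if "l < k" for l
  proof (rule MVT_abs[where f = "\<lambda>u. h ((z l)(l := u))"])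
    fix u assume "\<bar>u - c l\<bar> \<le> \<bar>x l - c l\<bar>"
    then have "(z l)(l := u) \<in> H"
      using z_cube that cube by blast
    from partial[OF that this]
    show "((\<lambda>u. h ((z l)(l := u))) has_real_derivative g l ((z l)(l := u))) (at u)"
      by simp
  qed
  then obtain \<xi> where \<xi>: "\<And>l. l < k \<Longrightarrow> \<bar>\<xi> l - c l\<bar> \<le> \<bar>x l - c l\<bar> \<and>
      h ((z l)(l := x l)) - h ((z l)(l := c l)) = (x l - c l) * g l ((z l)(l := \<xi> l))"
    by metis
  have step: "(z l)(l := x l) = z (Suc l)" "(z l)(l := c l) = z l" for l
    by (auto simp: z_def)
  have "z k = x" "z 0 = c"
    using x c by (auto simp: z_def cube_def slice_def)
  then have "h x - h c = (\<Sum>l<k. h (z (Suc l)) - h (z l))"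
    using sum_lessThan_telescope[of "\<lambda>l. h (z l)" k] by simp
  also have "\<dots> = (\<Sum>l<k. (x l - c l) * g l ((z l)(l := \<xi> l)))"
    using \<xi> by (simp add: step)
  finally show ?thesis
    using \<xi> z_cube by (intro exI[of _ "\<lambda>l. (z l)(l := \<xi> l)"]) auto
qed

lemma has_real_derivative_of_increments:
  assumes "eventually (\<lambda>s. f s - f t = (\<Sum>l<k. (u s l - u t l) * G s l)) (at t)"
    and "\<And>l. l < k \<Longrightarrow> ((\<lambda>s. G s l) \<longlongrightarrow> G\<^sub>0 l) (at t)"
    and "\<And>l. l < k \<Longrightarrow> ((\<lambda>s. u s l) has_real_derivative d l) (at t)"
  shows "(f has_real_derivative (\<Sum>l<k. G\<^sub>0 l * d l)) (at t)"
proof -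
  have "((\<lambda>s. \<Sum>l<k. G s l * ((u s l - u t l) / (s - t))) \<longlongrightarrow> (\<Sum>l<k. G\<^sub>0 l * d l)) (at t)"
    using assms(2,3) by (intro tendsto_sum tendsto_mult) (auto simp: has_field_derivative_iff)
  moreover have "eventually (\<lambda>s.
      (\<Sum>l<k. G s l * ((u s l - u t l) / (s - t))) = (f s - f t) / (s - t)) (at t)"
    using assms(1) by eventually_elim (simp add: sum_divide_distrib mult.commute)
  ultimately show ?thesis
    by (simp add: has_field_derivative_iff tendsto_cong)
qed

lemma has_real_derivative_compose_partials:
  assumes H: "openin (top_of_set (slice k)) H" and "\<gamma> t \<in> H"
    and slice: "eventually (\<lambda>s. \<gamma> s \<in> slice k) (at t)"
    and \<gamma>': "\<And>i. i < k \<Longrightarrow> ((\<lambda>s. \<gamma> s i) has_real_derivative d i) (at t)"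
    and partial: "\<And>i p. i < k \<Longrightarrow> p \<in> H \<Longrightarrow>
      ((\<lambda>u. h (p(i := u))) has_real_derivative g i p) (at (p i))"
    and cont: "\<And>i. i < k \<Longrightarrow> continuous_on H (g i)"
  shows "((\<lambda>s. h (\<gamma> s)) has_real_derivative (\<Sum>i<k. g i (\<gamma> t) * d i)) (at t)"
proof -
  define c where "c = \<gamma> t"
  have "c \<in> H" "c \<in> slice k"
    using \<open>\<gamma> t \<in> H\<close> openin_subset[OF H] by (auto simp: c_def)
  obtain \<delta> where "\<delta> > 0" "cube k c \<delta> \<subseteq> H"
    using openin_slice_contains_cube[OF H \<open>c \<in> H\<close>] by blast
  define r where "r s = (\<Sum>i<k. \<bar>\<gamma> s i - c i\<bar>)" for s
  have "((\<lambda>s. \<gamma> s i) \<longlongrightarrow> c i) (at t)" if "i < k" for i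
    using DERIV_isCont[OF \<gamma>'[OF that]] by (simp add: isCont_def c_def)
  then have "(r \<longlongrightarrow> (\<Sum>i<k. \<bar>c i - c i\<bar>)) (at t)"
    unfolding r_def by (intro tendsto_intros) auto
  then have r: "(r \<longlongrightarrow> 0) (at t)"
    by simp
  have in_cube: "\<gamma> s \<in> cube k c (r s)" if "\<gamma> s \<in> slice k" for s
    using that by (auto simp: cube_def r_def intro: member_le_sum)
  define near where "near s \<longleftrightarrow> \<gamma> s \<in> slice k \<and> r s < \<delta>" for s
  have "eventually near (at t)"
    using slice order_tendstoD(2)[OF r \<open>\<delta> > 0\<close>] by eventually_elim (simp add: near_def)
  have cube_H: "cube k c (r s) \<subseteq> H" if "near s" for s
    using that cube_mono[of "r s" \<delta> k c] \<open>cube k c \<delta> \<subseteq> H\<close> by (auto simp: near_def)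
  have "\<exists>w. near s \<longrightarrow> (\<forall>l<k. w l \<in> cube k c (r s)) \<and>
      h (\<gamma> s) - h c = (\<Sum>l<k. (\<gamma> s l - c l) * g l (w l))" for s
  proof (cases "near s")
    case True
    then show ?thesis
      using increment_eq_sum_partials[OF \<open>c \<in> slice k\<close> in_cube cube_H partial]
      by (auto simp: near_def)
  qed simp
  then obtain w where w: "\<And>s l. near s \<Longrightarrow> l < k \<Longrightarrow> w s l \<in> cube k c (r s)"
    and increment: "\<And>s. near s \<Longrightarrow> h (\<gamma> s) - h c = (\<Sum>l<k. (\<gamma> s l - c l) * g l (w s l))"
    by metis
  have lim: "((\<lambda>s. g l (w s l)) \<longlongrightarrow> g l c) (at t)" if "l < k" for l
  proof (rule continuous_within_tendsto_compose[where x = "\<lambda>s. w s l"])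
    show "continuous (at c within H) (g l)"
      using cont[OF that] \<open>c \<in> H\<close> by (simp add: continuous_on_eq_continuous_within)
    show "eventually (\<lambda>s. w s l \<in> H) (at t)"
      using \<open>eventually near (at t)\<close> by eventually_elim (use w that cube_H in blast)
    show "((\<lambda>s. w s l) \<longlongrightarrow> c) (at t)"
      using \<open>eventually near (at t)\<close> w that
      by (intro tendsto_of_mem_cube[OF r _ \<open>c \<in> slice k\<close>]) (auto simp: r_def elim: eventually_mono)
  qed
  have "eventually (\<lambda>s. h (\<gamma> s) - h (\<gamma> t) = (\<Sum>l<k. (\<gamma> s l - \<gamma> t l) * g l (w s l))) (at t)"
    using \<open>eventually near (at t)\<close> by eventually_elim (simp add: increment flip: c_def)
  from has_real_derivative_of_increments[OF this lim \<gamma>'] show ?thesis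
    by (simp add: c_def)
qed

definition chain_append :: "nat \<Rightarrow> (nat \<Rightarrow> 'a) \<Rightarrow> (nat \<Rightarrow> 'a) \<Rightarrow> nat \<Rightarrow> 'a" where
  "chain_append r hs hs' j = (if j < r then hs j else hs' (j - r))"

definition skip_coords :: "nat \<Rightarrow> nat \<Rightarrow> (nat \<Rightarrow> real) \<Rightarrow> nat \<Rightarrow> real" where
  "skip_coords k r z i = (if i < k then z i else z (i + r))"

lemma ext_chain_append_prefix:
  "i < k + r \<Longrightarrow> ext k (r + r') (chain_append r hs hs') y i = ext k r hs y i"
  by (auto simp: ext_def chain_append_def)

lemma skip_coords_ext_chain_append:
  "skip_coords k r (ext k (r + r') (chain_append r hs hs') y) = ext k r' hs' y"
  by (auto simp: fun_eq_iff skip_coords_def ext_def chain_append_def)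

lemma poly_fun_skip_coords:
  assumes "poly_fun (k + r') p"
  shows "poly_fun (k + (r + r')) (\<lambda>z. p (skip_coords k r z))"
proof (rule poly_fun_compose[OF assms])
  fix i assume "i < k + r'"
  then show "poly_fun (k + (r + r')) (\<lambda>z. skip_coords k r z i)"
    by (cases "i < k") (auto simp: skip_coords_def intro: poly_fun.pvar)
qed

lemma poly_fun_chain_append_left:
  assumes "poly_fun (k + r) p"
  shows "poly_fun (k + (r + r')) p"
    and "p (ext k (r + r') (chain_append r hs hs') y) = p (ext k r hs y)"
proof -
  show "poly_fun (k + (r + r')) p"
    using poly_fun_mono[OF assms] by simp
  show "p (ext k (r + r') (chain_append r hs hs') y) = p (ext k r hs y)"
    using poly_fun_cong[OF assms] ext_chain_append_prefix by blast
qed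

lemma poly_fun_chain_append_right:
  assumes "poly_fun (k + r') p"
  shows "poly_fun (k + (r + r')) (\<lambda>z. p (skip_coords k r z))"
    and "p (skip_coords k r (ext k (r + r') (chain_append r hs hs') y)) = p (ext k r' hs' y)"
  using poly_fun_skip_coords[OF assms] by (simp_all add: skip_coords_ext_chain_append)

lemma noetherian_chain_empty: "open_conn k H \<Longrightarrow> noetherian_chain k H 0 hs"
  by (simp add: noetherian_chain_def)

lemma noetherian_chain_append:
  assumes chain: "noetherian_chain k H r hs" and chain': "noetherian_chain k H r' hs'"
  shows "noetherian_chain k H (r + r') (chain_append r hs hs')"
  unfolding noetherian_chain_def
proof (intro conjI allI impI)
  show "open_conn k H"
    using chain by (simp add: noetherian_chain_def)
  show "real_analytic_dim k (chain_append r hs hs' j) H" if "j < r + r'" for j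
    using chain chain' that by (auto simp: noetherian_chain_def chain_append_def)
  fix i j assume "i < k" "j < r + r'"
  show "\<exists>q. poly_fun (k + (r + r')) q \<and> (\<forall>y\<in>H. ((\<lambda>s. chain_append r hs hs' j (y(i := s)))
      has_real_derivative q (ext k (r + r') (chain_append r hs hs') y)) (at (y i)))"
  proof (cases "j < r")
    case True
    with chain \<open>i < k\<close> obtain q where "poly_fun (k + r) q"
      "\<forall>y\<in>H. ((\<lambda>s. hs j (y(i := s))) has_real_derivative q (ext k r hs y)) (at (y i))"
      unfolding noetherian_chain_def by blast
    with True show ?thesis
      by (intro exI[of _ q]) (simp add: chain_append_def poly_fun_chain_append_left)
  next
    case False
    with chain' \<open>i < k\<close> \<open>j < r + r'\<close> obtain q where "poly_fun (k + r') q"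
      "\<forall>y\<in>H. ((\<lambda>s. hs' (j - r) (y(i := s))) has_real_derivative q (ext k r' hs' y)) (at (y i))"
      unfolding noetherian_chain_def by (metis add_diff_inverse_nat nat_add_left_cancel_less)
    with False show ?thesis
      by (intro exI[of _ "\<lambda>z. q (skip_coords k r z)"])
        (simp add: chain_append_def poly_fun_chain_append_right)
  qed
qed

lemma noetherian_funs_common_chain:
  fixes l :: nat
  assumes "open_conn k H" "\<And>i. i < l \<Longrightarrow> noetherian_fun k H (F i)"
  shows "\<exists>r hs P. noetherian_chain k H r hs \<and>
    (\<forall>i<l. poly_fun (k + r) (P i) \<and> (\<forall>y\<in>H. F i y = P i (ext k r hs y)))"
  using assms(2)
proof (induction l)
  case 0
  show ?case
    using noetherian_chain_empty[OF assms(1)] by blast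
next
  case (Suc l)
  then obtain r hs P where chain: "noetherian_chain k H r hs"
    and P: "\<forall>i<l. poly_fun (k + r) (P i) \<and> (\<forall>y\<in>H. F i y = P i (ext k r hs y))"
    by auto
  obtain r' hs' p where chain': "noetherian_chain k H r' hs'" and p: "poly_fun (k + r') p"
    and Fl: "\<forall>y\<in>H. F l y = p (ext k r' hs' y)"
    using Suc.prems[of l] unfolding noetherian_fun_def by auto
  define P' where "P' i = (if i < l then P i else (\<lambda>z. p (skip_coords k r z)))" for i
  have "poly_fun (k + (r + r')) (P' i) \<and>
      (\<forall>y\<in>H. F i y = P' i (ext k (r + r') (chain_append r hs hs') y))" if "i < Suc l" for i
  proof (cases "i < l")
    case True
    then show ?thesis
      using P poly_fun_chain_append_left[of k r "P i" r'] by (simp add: P'_def)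
  next
    case False
    then have "i = l"
      using that by simp
    then show ?thesis
      using Fl poly_fun_chain_append_right[OF p] by (simp add: P'_def)
  qed
  then show ?case
    using noetherian_chain_append[OF chain chain'] by blast
qed

lemma continuous_on_poly_fun_ext:
  assumes chain: "noetherian_chain k H r hs" and p: "poly_fun (k + r) p"
  shows "continuous_on H (\<lambda>y. p (ext k r hs y))"
proof (rule continuous_on_compose2[OF continuous_on_poly_fun[OF p] _ subset_UNIV])
  have H: "openin (top_of_set (slice k)) H"
    using chain by (simp add: noetherian_chain_def open_conn_def)
  have "continuous_on H (hs j)" if "j < r" for j
    using chain that continuous_on_real_analytic_dim[OF H] by (simp add: noetherian_chain_def)
  then have "continuous_on H (\<lambda>y. ext k r hs y i)" for i
    by (cases "i < k"; cases "i < k + r")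
      (auto simp: ext_def continuous_on_subset[OF continuous_on_product_coordinates])
  then show "continuous_on H (ext k r hs)"
    by (rule continuous_on_coordinatewise_then_product)
qed

lemma eventually_solution_in_slice:
  assumes "open_conn m D" "is_solution m D F X\<^sub>0 a b \<psi>" "t \<in> ointerval a b"
  shows "eventually (\<lambda>s. \<psi> s \<in> slice m) (at t)"
proof -
  have "eventually (\<lambda>s. s \<in> ointerval a b) (at t)"
    by (rule eventually_at_in_open'[OF open_ointerval assms(3)])
  then show ?thesis
    by eventually_elim (use assms(1,2) in \<open>auto simp: is_solution_def open_conn_def\<close>)
qed

lemma has_real_derivative_along_solution:
  assumes D: "open_conn m D" and sol: "is_solution m D F X\<^sub>0 a b \<psi>" and t: "t \<in> ointerval a b"
    and chain: "noetherian_chain m D r hs"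
    and Q: "\<And>i. i < m \<Longrightarrow> poly_fun (m + r) (Q i)"
      "\<And>i y. i < m \<Longrightarrow> y \<in> D \<Longrightarrow>
         ((\<lambda>s. h (y(i := s))) has_real_derivative Q i (ext m r hs y)) (at (y i))"
  shows "((\<lambda>s. h (\<psi> s)) has_real_derivative (\<Sum>i<m. Q i (ext m r hs (\<psi> t)) * F i (\<psi> t))) (at t)"
proof (rule has_real_derivative_compose_partials)
  show "openin (top_of_set (slice m)) D"
    using D by (simp add: open_conn_def)
  show "\<psi> t \<in> D" "\<And>i. i < m \<Longrightarrow> ((\<lambda>s. \<psi> s i) has_real_derivative F i (\<psi> t)) (at t)"
    using sol t by (auto simp: is_solution_def)
  show "eventually (\<lambda>s. \<psi> s \<in> slice m) (at t)"
    by (rule eventually_solution_in_slice[OF D sol t])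
  show "continuous_on D (\<lambda>y. Q i (ext m r hs y))" if "i < m" for i
    by (rule continuous_on_poly_fun_ext[OF chain Q(1)[OF that]])
qed (rule Q(2))

text \<open>Coordinate m + j of the enlarged system stands for h_j(y); by the chain rule it evolves
  by the sum over l of (d h_j / d y_l) F_l, where P and Q express F and the partial derivatives
  of the chain as polynomials in (y, h(y)).\<close>

definition lifted_field ::
    "nat \<Rightarrow> (nat \<Rightarrow> (nat \<Rightarrow> real) \<Rightarrow> real) \<Rightarrow> (nat \<Rightarrow> nat \<Rightarrow> (nat \<Rightarrow> real) \<Rightarrow> real)
      \<Rightarrow> nat \<Rightarrow> (nat \<Rightarrow> real) \<Rightarrow> real" where
  "lifted_field m P Q i = (if i < m then P i else (\<lambda>z. \<Sum>l<m. Q l (i - m) z * P l z))"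

lemma polynomial_ivp_lifted_field:
  assumes "\<And>i. i < m \<Longrightarrow> poly_fun (m + r) (P i)"
    and "\<And>i j. i < m \<Longrightarrow> j < r \<Longrightarrow> poly_fun (m + r) (Q i j)"
  shows "polynomial_ivp (m + r) (slice (m + r)) (lifted_field m P Q) (ext m r hs X\<^sub>0)"
  using assms by (auto simp: polynomial_ivp_def lifted_field_def slice_def ext_def
      intro!: poly_fun_sum poly_fun.pmult)

lemma is_solution_lifted_field:
  assumes D: "open_conn m D" and sol: "is_solution m D F X\<^sub>0 a b \<psi>"
    and chain: "noetherian_chain m D r hs"
    and P: "\<And>i y. i < m \<Longrightarrow> y \<in> D \<Longrightarrow> F i y = P i (ext m r hs y)"
    and Q: "\<And>i j. i < m \<Longrightarrow> j < r \<Longrightarrow> poly_fun (m + r) (Q i j)"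
      "\<And>i j y. i < m \<Longrightarrow> j < r \<Longrightarrow> y \<in> D \<Longrightarrow>
         ((\<lambda>s. hs j (y(i := s))) has_real_derivative Q i j (ext m r hs y)) (at (y i))"
  shows "is_solution (m + r) (slice (m + r)) (lifted_field m P Q) (ext m r hs X\<^sub>0) a b
    (\<lambda>t. ext m r hs (\<psi> t))"
  unfolding is_solution_def
proof (intro conjI ballI allI impI)
  show "ext m r hs (\<psi> 0) = ext m r hs X\<^sub>0"
    using sol by (simp add: is_solution_def)
  fix t assume t: "t \<in> ointerval a b"
  show "ext m r hs (\<psi> t) \<in> slice (m + r)"
    by (simp add: slice_def ext_def)
  have "\<psi> t \<in> D" and \<psi>': "\<And>l. l < m \<Longrightarrow> ((\<lambda>s. \<psi> s l) has_real_derivative F l (\<psi> t)) (at t)"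
    using sol t by (auto simp: is_solution_def)
  then have F: "F l (\<psi> t) = P l (ext m r hs (\<psi> t))" if "l < m" for l
    using P that by simp
  fix i assume "i < m + r"
  show "((\<lambda>s. ext m r hs (\<psi> s) i)
      has_real_derivative lifted_field m P Q i (ext m r hs (\<psi> t))) (at t)"
  proof (cases "i < m")
    case True
    then show ?thesis
      using \<psi>'[OF True] F[OF True] by (simp add: ext_def lifted_field_def)
  next
    case False
    then have "i - m < r" "(\<lambda>s. ext m r hs (\<psi> s) i) = (\<lambda>s. hs (i - m) (\<psi> s))"
      using \<open>i < m + r\<close> by (auto simp: ext_def)
    then show ?thesis
      using has_real_derivative_along_solution[OF D sol t chain Q(1,2)] False F
      by (simp add: lifted_field_def)
  qed
qed

lemma noetherian_ivp_solution_lifts: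
  assumes ivp: "noetherian_ivp m D F X\<^sub>0" and sol: "is_solution m D F X\<^sub>0 a b \<psi>"
  shows "\<exists>r F' X\<^sub>0' \<psi>'. polynomial_ivp (m + r) (slice (m + r)) F' X\<^sub>0' \<and>
    is_solution (m + r) (slice (m + r)) F' X\<^sub>0' a b \<psi>' \<and> (\<forall>t. \<forall>i<m. \<psi>' t i = \<psi> t i)"
proof -
  have D: "open_conn m D"
    using ivp by (simp add: noetherian_ivp_def)
  obtain r hs P where chain: "noetherian_chain m D r hs"
    and P: "\<forall>i<m. poly_fun (m + r) (P i) \<and> (\<forall>y\<in>D. F i y = P i (ext m r hs y))"
    using noetherian_funs_common_chain[OF D, of m F] ivp unfolding noetherian_ivp_def by blast
  obtain Q where Q: "\<And>i j. i < m \<Longrightarrow> j < r \<Longrightarrow> poly_fun (m + r) (Q i j)"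
    "\<And>i j y. i < m \<Longrightarrow> j < r \<Longrightarrow> y \<in> D \<Longrightarrow>
       ((\<lambda>s. hs j (y(i := s))) has_real_derivative Q i j (ext m r hs y)) (at (y i))"
    using chain unfolding noetherian_chain_def by metis
  have "polynomial_ivp (m + r) (slice (m + r)) (lifted_field m P Q) (ext m r hs X\<^sub>0)"
    using P Q(1) by (intro polynomial_ivp_lifted_field) auto
  moreover have "is_solution (m + r) (slice (m + r)) (lifted_field m P Q) (ext m r hs X\<^sub>0) a b
      (\<lambda>t. ext m r hs (\<psi> t))"
    using P by (intro is_solution_lifted_field[OF D sol chain _ Q]) auto
  moreover have "\<forall>t. \<forall>i<m. ext m r hs (\<psi> t) i = \<psi> t i"
    by (simp add: ext_def)
  ultimately show ?thesis
    by blast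
qed

lemma noetherian_ivp_if_polynomial_ivp:
  assumes "polynomial_ivp m D F X\<^sub>0"
  shows "noetherian_ivp m D F X\<^sub>0"
proof -
  have D: "D = slice m" and F: "\<And>i. i < m \<Longrightarrow> poly_fun m (F i)"
    using assms by (auto simp: polynomial_ivp_def)
  then have "open_conn m D"
    by (simp add: open_conn_def connected_slice)
  moreover have "noetherian_fun m D (F i)" if "i < m" for i
    unfolding noetherian_fun_def
  proof (intro exI conjI)
    show "noetherian_chain m D 0 (\<lambda>_ _. 0)"
      using \<open>open_conn m D\<close> by (rule noetherian_chain_empty)
    show "poly_fun (m + 0) (F i)"
      using F[OF that] by simp
    show "\<forall>y\<in>D. F i y = F i (ext m 0 (\<lambda>_ _. 0) y)"
      by (intro ballI poly_fun_cong[OF F[OF that]]) (simp add: ext_def)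
  qed
  moreover have "X\<^sub>0 \<in> D"
    using assms unfolding polynomial_ivp_def by blast
  ultimately show ?thesis
    by (simp add: noetherian_ivp_def)
qed

theorem proposition7p4:
  fixes n :: nat and \<alpha> \<beta> :: ereal and \<phi> :: "real \<Rightarrow> nat \<Rightarrow> real"
  assumes "\<alpha> < 0" and "0 < \<beta>"
  shows "proj_of_noetherian_ivp n \<alpha> \<beta> \<phi> \<longleftrightarrow> proj_of_polynomial_ivp n \<alpha> \<beta> \<phi>"
proof
  assume "proj_of_noetherian_ivp n \<alpha> \<beta> \<phi>"
  then obtain m D F X\<^sub>0 \<psi> where "n \<le> m" "noetherian_ivp m D F X\<^sub>0" "is_solution m D F X\<^sub>0 \<alpha> \<beta> \<psi>"
    and \<phi>: "\<forall>t\<in>ointerval \<alpha> \<beta>. \<forall>i<n. \<psi> t i = \<phi> t i"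
    unfolding proj_of_noetherian_ivp_def by blast
  then obtain r F' X\<^sub>0' \<psi>' where "polynomial_ivp (m + r) (slice (m + r)) F' X\<^sub>0'"
    "is_solution (m + r) (slice (m + r)) F' X\<^sub>0' \<alpha> \<beta> \<psi>'" and "\<forall>t. \<forall>i<m. \<psi>' t i = \<psi> t i"
    using noetherian_ivp_solution_lifts by blast
  with \<open>n \<le> m\<close> \<phi> show "proj_of_polynomial_ivp n \<alpha> \<beta> \<phi>"
    unfolding proj_of_polynomial_ivp_def
    by (intro exI[of _ "m + r"] exI[of _ "slice (m + r)"] exI[of _ F'] exI[of _ X\<^sub>0'] exI[of _ \<psi>'])
      auto
next
  assume "proj_of_polynomial_ivp n \<alpha> \<beta> \<phi>"
  then show "proj_of_noetherian_ivp n \<alpha> \<beta> \<phi>"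
    unfolding proj_of_polynomial_ivp_def proj_of_noetherian_ivp_def
    using noetherian_ivp_if_polynomial_ivp by blast
qed

end
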